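(* Let $g,h,\lambda_{1,1}$ be fixed parameters, and consider the transformation of triples $(A,B,C)=(\lambda_{1,4}^{(i-1)},\lambda_{1,3}^{(i-1)},\lambda_{1,4}^{(i)})$ of nonzero quantities given by $$A\mapsto C,\qquad B\mapsto \frac{BC+h\lambda_{1,1}}{A},\qquad C\mapsto \frac{C^2}{A}+\frac{h\lambda_{1,1}C}{AB}+\frac{g\lambda_{1,1}}{B}.$$ Then the two functions $$G_\gamma=\frac{C}{A}+\frac{A}{C}+\frac{h\lambda_{1,1}}{BA}+\frac{g\lambda_{1,1}}{BC},\qquad \lambda_{4,4}=\frac{gA}{B}+\frac{hC}{B}$$ are invariant under this transformation.
   Context: This is the action of the Dehn twist around the geodesic $\gamma$ separating the two holes of a Riemann sphere with two holes, each with two bordered cusps ($PIII^{D_6}$ case): $\lambda_{\alpha,\beta}^{(i)}$ denotes the $\lambda$-length of the arc between bordered cusps $\alpha$ and $\beta$ winding $i$ times around the lower hole, $\lambda_{1,1}$ is the $\lambda$-length of the arc from cusp $1$ back to itself, and $g,h$ are $\lambda$-lengths of arcs on the other hole. The claim is an identity of rational functions. *)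

theory Defs
  imports Main
begin

definition dehnT :: "'a::field \<Rightarrow> 'a \<Rightarrow> 'a \<Rightarrow> 'a \<Rightarrow> 'a \<Rightarrow> 'a \<Rightarrow> 'a \<times> 'a \<times> 'a" where
  "dehnT g h l11 A B C =
     (C, (B * C + h * l11) / A, C^2 / A + h * l11 * C / (A * B) + g * l11 / B)"

definition Ggamma :: "'a::field \<Rightarrow> 'a \<Rightarrow> 'a \<Rightarrow> 'a \<times> 'a \<times> 'a \<Rightarrow> 'a" where
  "Ggamma g h l11 t = (case t of (A, B, C) \<Rightarrow>
     C / A + A / C + h * l11 / (B * A) + g * l11 / (B * C))"

definition lambda44 :: "'a::field \<Rightarrow> 'a \<Rightarrow> 'a \<times> 'a \<times> 'a \<Rightarrow> 'a" where
  "lambda44 g h t = (case t of (A, B, C) \<Rightarrow> g * A / B + h * C / B)"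

end

theory Submission
  imports Defs
begin

text \<open>Writing the image of \<open>(A, B, C)\<close> as \<open>(C, B'/A, C'/(A B))\<close> with polynomial numerators
  \<open>B' = B C + h \<lambda>\<^sub>1\<^sub>1\<close> and \<open>C' = B C\<^sup>2 + h \<lambda>\<^sub>1\<^sub>1 C + g \<lambda>\<^sub>1\<^sub>1 A\<close>, both invariance claims
  reduce, after clearing denominators, to polynomial identities in which \<open>B'\<close> (and \<open>C'\<close>)
  split off as factors.\<close>

lemma dehnT_eq_fractions:
  fixes g h l11 A B C :: "'a::field"
  assumes "A \<noteq> 0" and "B \<noteq> 0"
  shows "dehnT g h l11 A B C =
    (C, (B * C + h * l11) / A, (B * C^2 + h * l11 * C + g * l11 * A) / (A * B))"
  using assms by (simp add: dehnT_def field_simps)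

lemma lambda44_numerator_factor:
  fixes g h l11 A B C :: "'a::comm_ring_1"
  shows "g * C * A * B + h * (B * C^2 + h * l11 * C + g * l11 * A)
       = (g * A + h * C) * (B * C + h * l11)"
  by (simp add: algebra_simps power2_eq_square)

lemma Ggamma_numerator_factor:
  fixes g h l11 A B C :: "'a::comm_ring_1"
  defines "B' \<equiv> B * C + h * l11" and "C' \<equiv> B * C^2 + h * l11 * C + g * l11 * A"
  shows "C' * C' * B' + C * C * A * A * B * B * B' + h * l11 * A * A * B * C'
           + g * l11 * A * A * A * B * B * C
       = (C * C * B + A * A * B + h * l11 * C + g * l11 * A) * (B' * C')"
  unfolding B'_def C'_def by (simp add: algebra_simps power2_eq_square)

lemma lambda44_dehnT:
  fixes g h l11 A B C :: "'a::field"
  assumes "A \<noteq> 0" and "B \<noteq> 0" and "B * C + h * l11 \<noteq> 0"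
  shows "lambda44 g h (dehnT g h l11 A B C) = lambda44 g h (A, B, C)"
proof -
  define B' where "B' = B * C + h * l11"
  define C' where "C' = B * C^2 + h * l11 * C + g * l11 * A"
  have "B' \<noteq> 0" using assms(3) by (simp add: B'_def)
  have "lambda44 g h (dehnT g h l11 A B C) = g * C / (B' / A) + h * (C' / (A * B)) / (B' / A)"
    using assms(1,2) by (simp add: dehnT_eq_fractions lambda44_def B'_def C'_def)
  also have "\<dots> = (g * C * A * B + h * C') / (B * B')"
    using assms(1,2) \<open>B' \<noteq> 0\<close> by (simp add: field_simps)
  also have "\<dots> = (g * A + h * C) * B' / (B * B')"
    unfolding B'_def C'_def lambda44_numerator_factor ..
  also have "\<dots> = lambda44 g h (A, B, C)"
    using assms(2) \<open>B' \<noteq> 0\<close> by (simp add: lambda44_def field_simps)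
  finally show ?thesis .
qed

lemma Ggamma_dehnT:
  fixes g h l11 A B C :: "'a::field"
  assumes "A \<noteq> 0" and "B \<noteq> 0" and "C \<noteq> 0"
    and "B * C + h * l11 \<noteq> 0" and "B * C^2 + h * l11 * C + g * l11 * A \<noteq> 0"
  shows "Ggamma g h l11 (dehnT g h l11 A B C) = Ggamma g h l11 (A, B, C)"
proof -
  define B' where "B' = B * C + h * l11"
  define C' where "C' = B * C^2 + h * l11 * C + g * l11 * A"
  have "B' \<noteq> 0" and "C' \<noteq> 0" using assms(4,5) by (simp_all add: B'_def C'_def)
  have "Ggamma g h l11 (dehnT g h l11 A B C)
      = C' / (A * B) / C + C / (C' / (A * B)) + h * l11 / (B' / A * C)
        + g * l11 / (B' / A * (C' / (A * B)))"
    using assms(1,2) by (simp add: dehnT_eq_fractions Ggamma_def B'_def C'_def)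
  also have "\<dots> = (C' * C' * B' + C * C * A * A * B * B * B' + h * l11 * A * A * B * C'
                    + g * l11 * A * A * A * B * B * C) / (A * B * C * B' * C')"
    using assms(1-3) \<open>B' \<noteq> 0\<close> \<open>C' \<noteq> 0\<close> by (simp add: field_simps)
  also have "\<dots> = (C * C * B + A * A * B + h * l11 * C + g * l11 * A) * (B' * C')
                  / (A * B * C * B' * C')"
    unfolding B'_def C'_def Ggamma_numerator_factor ..
  also have "\<dots> = Ggamma g h l11 (A, B, C)"
    using assms(1-3) \<open>B' \<noteq> 0\<close> \<open>C' \<noteq> 0\<close> by (simp add: Ggamma_def field_simps)
  finally show ?thesis .
qed

theorem mainTheorem11:
  fixes g h l11 A B C :: "'a::field"
  assumes "A \<noteq> 0" and "B \<noteq> 0" and "C \<noteq> 0"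
    and "fst (snd (dehnT g h l11 A B C)) \<noteq> 0"
    and "snd (snd (dehnT g h l11 A B C)) \<noteq> 0"
  shows "Ggamma g h l11 (dehnT g h l11 A B C) = Ggamma g h l11 (A, B, C)
       \<and> lambda44 g h (dehnT g h l11 A B C) = lambda44 g h (A, B, C)"
proof -
  have "B * C + h * l11 \<noteq> 0" and "B * C^2 + h * l11 * C + g * l11 * A \<noteq> 0"
    using assms(4,5) by (simp_all add: dehnT_eq_fractions assms(1,2))
  then show ?thesis
    using assms(1-3) by (simp add: Ggamma_dehnT lambda44_dehnT)
qed

end
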